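(* In the setting of the context, assume $\omega=0$ and let $(h_1,h_2)\in\mathbb C(s)^2$ be a nonzero pair satisfying either $\widetilde\gamma_1h_1+\widetilde\gamma_2h_2+\omega=0$ with $h_1^{\iota_1}=h_1$, $h_2^{\iota_2}=h_2$, or $\widetilde\gamma_1h_1+\widetilde\gamma_2h_2=0$ with $h_1^{\iota_1}=-h_1$, $h_2^{\iota_2}=-h_2$. Then $\dfrac{h_2^{\sigma}(s)}{h_2(s)}=\dfrac{\widetilde\gamma^{\iota_1}(s)}{\widetilde\gamma(s)}$.
   Context: For a genus-zero weighted quadrant walk model (step set one of the five genus-zero sets, step weights $d_{i,j}$, Boltzmann weights $a,b>0$), set $A=1-1/a$, $B=1-1/b$, $\omega=1-A-B$. $s\mapsto(x(s),y(s))$ is a fixed rational parametrization by $\mathbb P^1$ of the kernel curve $\{xy(1-t\sum_{(i,j)}d_{i,j}x^iy^j)=0\}$ (for a fixed real $t$ transcendental over $\mathbb Q((d_{i,j}),a,b)$), with $x(1/s)=x(s)$ and $y(q/s)=y(s)$ for a fixed real $q$ not a root of unity. $\iota_1(s)=1/s$, $\iota_2(s)=q/s$, $\sigma(s)=qs=\iota_2(\iota_1(s))$, and $h^\tau=h\circ\tau$. $\widetilde\gamma_1=A/x(s)-td_{1,-1}/y(s)$, $\widetilde\gamma_2=B/y(s)-td_{-1,1}/x(s)$, $\widetilde\gamma=\widetilde\gamma_1/\widetilde\gamma_2$. *)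

theory Defs
  imports Complex_Main "HOL-Computational_Algebra.Polynomial"
begin

text \<open>Elements of \<open>\<complex>(s)\<close> are represented by complex functions that agree with a
  quotient of polynomials away from the zeros of the denominator; the values at the
  finitely many poles are irrelevant, and all identities between rational functions
  are stated for cofinitely many \<open>s\<close> (filter \<open>cofinite\<close>).\<close>

definition rat_fun :: "(complex \<Rightarrow> complex) \<Rightarrow> bool" where
  "rat_fun f \<longleftrightarrow> (\<exists>p r. r \<noteq> 0 \<and> (\<forall>z. poly r z \<noteq> 0 \<longrightarrow> f z = poly p z / poly r z))"

inductive_set gen_field :: "real set \<Rightarrow> real set" for S :: "real set" where
  rat: "r \<in> \<rat> \<Longrightarrow> r \<in> gen_field S"
| gen: "r \<in> S \<Longrightarrow> r \<in> gen_field S"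
| add: "u \<in> gen_field S \<Longrightarrow> v \<in> gen_field S \<Longrightarrow> u + v \<in> gen_field S"
| mult: "u \<in> gen_field S \<Longrightarrow> v \<in> gen_field S \<Longrightarrow> u * v \<in> gen_field S"
| uminus: "u \<in> gen_field S \<Longrightarrow> - u \<in> gen_field S"
| inverse: "u \<in> gen_field S \<Longrightarrow> inverse u \<in> gen_field S"

definition transcendental_over :: "real set \<Rightarrow> real \<Rightarrow> bool" where
  "transcendental_over K t \<longleftrightarrow>
     (\<forall>P :: real poly. P \<noteq> 0 \<longrightarrow> (\<forall>i. coeff P i \<in> K) \<longrightarrow> poly P t \<noteq> 0)"

text \<open>Genus-zero step sets: the support of the weights contains the two anti-diagonal
  steps, is contained in \<open>{(-1,1),(0,1),(1,1),(1,0),(1,-1)}\<close>, and is not reduced to the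
  two anti-diagonal steps (the five genus-zero sets, together with their images under
  the symmetry \<open>x \<leftrightarrow> y\<close>).\<close>

definition genus_zero_weights :: "(int \<Rightarrow> int \<Rightarrow> real) \<Rightarrow> bool" where
  "genus_zero_weights d \<longleftrightarrow>
     (\<forall>i j. d i j \<ge> 0) \<and>
     {(-1,1),(1,-1)} \<subseteq> {(i,j). d i j \<noteq> 0} \<and>
     {(i,j). d i j \<noteq> 0} \<subseteq> {(-1,1),(0,1),(1,1),(1,0),(1,-1)} \<and>
     {(i,j). d i j \<noteq> 0} \<noteq> {(-1,1),(1,-1)}"

text \<open>The kernel polynomial \<open>xy(1 - t \<Sum> d\<^sub>i\<^sub>,\<^sub>j x\<^sup>i y\<^sup>j)\<close>.\<close>

definition kernel :: "(int \<Rightarrow> int \<Rightarrow> real) \<Rightarrow> real \<Rightarrow> complex \<Rightarrow> complex \<Rightarrow> complex" where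
  "kernel d t X Y = X * Y - of_real t *
     (\<Sum>i\<in>{-1..1::int}. \<Sum>j\<in>{-1..1::int}.
        of_real (d i j) * X ^ nat (i + 1) * Y ^ nat (j + 1))"

definition kernel_param ::
  "(int \<Rightarrow> int \<Rightarrow> real) \<Rightarrow> real \<Rightarrow> (complex \<Rightarrow> complex) \<Rightarrow> (complex \<Rightarrow> complex) \<Rightarrow> bool" where
  "kernel_param d t x y \<longleftrightarrow> rat_fun x \<and> rat_fun y \<and>
     (\<exists>F. finite F \<and>
        inj_on (\<lambda>s. (x s, y s)) (- F) \<and>
        (\<forall>s\<in>- F. kernel d t (x s) (y s) = 0) \<and>
        finite ({(X, Y). kernel d t X Y = 0} - (\<lambda>s. (x s, y s)) ` (- F)))"

end

theory Submission
  imports Defs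
begin

text \<open>For \<open>\<omega> = 0\<close> both cases read \<open>\<gamma>\<^sub>1h\<^sub>1 + \<gamma>\<^sub>2h\<^sub>2 = 0\<close>, \<open>h\<^sub>1\<^sup>\<iota>\<^sup>1 = \<epsilon>h\<^sub>1\<close>,
  \<open>h\<^sub>2\<^sup>\<iota>\<^sup>2 = \<epsilon>h\<^sub>2\<close> with \<open>\<epsilon>\<^sup>2 = 1\<close>, whence
  \<open>h\<^sub>2\<^sup>\<sigma> = \<epsilon>h\<^sub>2\<^sup>\<iota>\<^sup>1 = -\<epsilon>\<gamma>\<^sup>\<iota>\<^sup>1h\<^sub>1\<^sup>\<iota>\<^sup>1 = -\<gamma>\<^sup>\<iota>\<^sup>1h\<^sub>1 = \<gamma>\<^sup>\<iota>\<^sup>1h\<^sub>2/\<gamma>\<close>.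
  The real work is to see that \<open>\<gamma>\<^sub>1\<close>, \<open>\<gamma>\<^sub>2\<close> and \<open>h\<^sub>2\<close> vanish at only finitely
  many parameters. The kernel curve meets the axes only at the origin, and meets the line
  \<open>Ay = td\<^sub>1\<^sub>,\<^sub>-\<^sub>1x\<close> in finitely many points: on that line the kernel is \<open>x\<^sup>2\<close> times a
  polynomial whose constant term is a nonzero multiple of \<open>A - A\<^sup>2 - t\<^sup>2d\<^sub>-\<^sub>1\<^sub>,\<^sub>1d\<^sub>1\<^sub>,\<^sub>-\<^sub>1\<close>,
  which does not vanish because \<open>t\<close> is transcendental. Injectivity of the parametrization
  pulls this back to finitely many zeros of \<open>\<gamma>\<^sub>1\<close>; as \<open>B = 1 - A\<close>, the zeros of \<open>\<gamma>\<^sub>2\<close>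
  are the same problem for the transposed model. Finally \<open>h\<^sub>2\<close>, being rational, vanishes
  either cofinitely (forcing \<open>h\<^sub>1 = 0\<close> too) or at finitely many points.\<close>

lemma rat_fun_eventually_zero_or_nonzero:
  assumes "rat_fun f"
  shows "(\<forall>\<^sub>F s in cofinite. f s = 0) \<or> (\<forall>\<^sub>F s in cofinite. f s \<noteq> 0)"
proof -
  obtain p r where r: "r \<noteq> 0" and f: "\<And>z. poly r z \<noteq> 0 \<Longrightarrow> f z = poly p z / poly r z"
    using assms unfolding rat_fun_def by blast
  have no_pole: "\<forall>\<^sub>F z in cofinite. poly r z \<noteq> 0"
    using poly_roots_finite[OF r] by (simp add: eventually_cofinite)
  show ?thesis
  proof (cases "p = 0")
    case True
    have "\<forall>\<^sub>F z in cofinite. f z = 0"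
      using no_pole by eventually_elim (simp add: f True)
    then show ?thesis ..
  next
    case False
    have "\<forall>\<^sub>F z in cofinite. poly p z \<noteq> 0"
      using poly_roots_finite[OF False] by (simp add: eventually_cofinite)
    then have "\<forall>\<^sub>F z in cofinite. f z \<noteq> 0"
      using no_pole by eventually_elim (simp add: f)
    then show ?thesis ..
  qed
qed

lemma eventually_cofinite_inverse:
  fixes P :: "'a::division_ring \<Rightarrow> bool"
  assumes "\<forall>\<^sub>F s in cofinite. P s"
  shows "\<forall>\<^sub>F s in cofinite. P (1 / s)"
proof -
  have "{s. \<not> P (1 / s)} = inverse -` {u. \<not> P u}"
    by (auto simp: inverse_eq_divide)
  moreover have "inj (inverse :: 'a \<Rightarrow> 'a)"
    by (metis injI inverse_inverse_eq)
  ultimately show ?thesis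
    using assms unfolding eventually_cofinite by (metis finite_vimageI)
qed

lemma gen_field_diff: "u \<in> gen_field S \<Longrightarrow> v \<in> gen_field S \<Longrightarrow> u - v \<in> gen_field S"
  unfolding diff_conv_add_uminus by (intro gen_field.add gen_field.uminus)

lemma transcendental_over_gen_field_quadratic:
  assumes "transcendental_over (gen_field S) t" and "[:c0, c1, c2:] \<noteq> 0"
    and "c0 \<in> gen_field S" "c1 \<in> gen_field S" "c2 \<in> gen_field S"
  shows "c0 + c1 * t + c2 * t^2 \<noteq> 0"
proof -
  have "0 \<in> gen_field S"
    by (rule gen_field.rat) simp
  then have "coeff [:c0, c1, c2:] i \<in> gen_field S" for i
    using assms(3-5) by (cases i; cases "i - 1"; simp add: coeff_pCons split: nat.splits)
  then have "poly [:c0, c1, c2:] t \<noteq> 0"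
    using assms(1,2) unfolding transcendental_over_def by blast
  then show ?thesis
    by (simp add: algebra_simps power2_eq_square)
qed

lemma genus_zero_weights_anti_diagonal:
  "genus_zero_weights d \<Longrightarrow> d (-1) 1 \<noteq> 0 \<and> d 1 (-1) \<noteq> 0"
  unfolding genus_zero_weights_def by auto

lemma transcendental_kernel_conditions:
  assumes d: "genus_zero_weights d"
    and t: "transcendental_over (gen_field ({d i j | i j. True} \<union> {a, b})) t"
  shows "t \<noteq> 0" and "t^2 * d (-1) 1 * d 1 (-1) \<noteq> (1 - 1 / a) - (1 - 1 / a)^2"
proof -
  let ?K = "gen_field ({d i j | i j. True} \<union> {a, b})"
  have zero: "0 \<in> ?K" and one: "1 \<in> ?K"
    by (rule gen_field.rat; simp)+
  have A: "1 - 1 / a \<in> ?K"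
    unfolding divide_inverse mult_1_left
    by (intro gen_field_diff gen_field.inverse one gen_field.gen) auto
  have c0: "(1 - 1 / a) - (1 - 1 / a)^2 \<in> ?K"
    unfolding power2_eq_square by (rule gen_field_diff[OF A gen_field.mult[OF A A]])
  have c2: "- (d (-1) 1 * d 1 (-1)) \<in> ?K"
    by (intro gen_field.uminus gen_field.mult gen_field.gen) blast+
  have "[:(1 - 1 / a) - (1 - 1 / a)^2, 0, - (d (-1) 1 * d 1 (-1)):] \<noteq> 0"
    using genus_zero_weights_anti_diagonal[OF d] by simp
  from transcendental_over_gen_field_quadratic[OF t this c0 zero c2]
  show "t^2 * d (-1) 1 * d 1 (-1) \<noteq> (1 - 1 / a) - (1 - 1 / a)^2"
    by (simp add: algebra_simps)
  have "0 + 1 * t + 0 * t^2 \<noteq> 0"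
    by (rule transcendental_over_gen_field_quadratic[OF t _ zero one zero]) simp
  then show "t \<noteq> 0"
    by simp
qed

lemma kernel_genus_zero:
  assumes "genus_zero_weights d"
  shows "kernel d t X Y = X * Y - of_real t * (of_real (d (-1) 1) * Y^2 + of_real (d 0 1) * X * Y^2
     + of_real (d 1 1) * X^2 * Y^2 + of_real (d 1 0) * X^2 * Y + of_real (d 1 (-1)) * X^2)"
proof -
  have "{-1..1::int} = {-1, 0, 1}"
    by auto
  moreover have "d (-1) (-1) = 0" "d (-1) 0 = 0" "d 0 (-1) = 0" "d 0 0 = 0"
    using assms unfolding genus_zero_weights_def by auto
  ultimately show ?thesis
    unfolding kernel_def by (simp add: algebra_simps power2_eq_square)
qed

lemma kernel_transpose: "kernel (\<lambda>i j. d j i) t X Y = kernel d t Y X"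
  unfolding kernel_def by (subst sum.swap) (simp add: mult_ac)

lemma genus_zero_weights_transpose:
  "genus_zero_weights d \<Longrightarrow> genus_zero_weights (\<lambda>i j. d j i)"
  unfolding genus_zero_weights_def by auto

lemma kernel_param_transpose:
  assumes "kernel_param d t x y"
  shows "kernel_param (\<lambda>i j. d j i) t y x"
proof -
  obtain F where F: "finite F" and inj: "inj_on (\<lambda>s. (x s, y s)) (- F)"
    and on_curve: "\<forall>s\<in>- F. kernel d t (x s) (y s) = 0"
    and cover: "finite ({(X, Y). kernel d t X Y = 0} - (\<lambda>s. (x s, y s)) ` (- F))"
    using assms unfolding kernel_param_def by blast
  have "{(X, Y). kernel (\<lambda>i j. d j i) t X Y = 0} - (\<lambda>s. (y s, x s)) ` (- F)
      = prod.swap ` ({(X, Y). kernel d t X Y = 0} - (\<lambda>s. (x s, y s)) ` (- F))"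
    \<comment> \<open>Unrestricted, \<open>kernel_transpose\<close> loops: its left side unifies with every \<open>kernel d\<close>.\<close>
    unfolding image_set_diff[OF inj_swap] image_image
    by (auto simp: kernel_transpose[of d] image_def)
  then have "finite ({(X, Y). kernel (\<lambda>i j. d j i) t X Y = 0} - (\<lambda>s. (y s, x s)) ` (- F))"
    using cover by simp
  moreover have "inj_on (\<lambda>s. (y s, x s)) (- F)"
    using inj by (auto simp: inj_on_def)
  ultimately show ?thesis
    using assms F on_curve unfolding kernel_param_def
    by (intro conjI exI[of _ F]) (simp_all add: kernel_transpose[of d])
qed

lemma kernel_param_eventually_avoids:
  assumes "kernel_param d t x y"
    and "finite {(X, Y). kernel d t X Y = 0 \<and> P X Y}"
  shows "\<forall>\<^sub>F s in cofinite. \<not> P (x s) (y s)"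
proof -
  obtain F where F: "finite F" and inj: "inj_on (\<lambda>s. (x s, y s)) (- F)"
    and on_curve: "\<forall>s\<in>- F. kernel d t (x s) (y s) = 0"
    using assms(1) unfolding kernel_param_def by blast
  have "{s. P (x s) (y s)} \<subseteq> F \<union> ((\<lambda>s. (x s, y s)) -` {(X, Y). kernel d t X Y = 0 \<and> P X Y} \<inter> - F)"
    using on_curve by auto
  then show ?thesis
    unfolding eventually_cofinite
    using F finite_vimage_IntI[OF assms(2) inj] by (auto intro: finite_subset)
qed

lemma kernel_curve_axes_line_finite:
  fixes A t :: real
  assumes d: "genus_zero_weights d" and t: "t \<noteq> 0"
    and generic: "t^2 * d (-1) 1 * d 1 (-1) \<noteq> A - A^2"
  shows "finite {(X, Y). kernel d t X Y = 0 \<and>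
           (X = 0 \<or> Y = 0 \<or> of_real A * Y = of_real (t * d 1 (-1)) * X)}"
proof -
  have \<alpha>: "d (-1) 1 \<noteq> 0" and e: "d 1 (-1) \<noteq> 0"
    using genus_zero_weights_anti_diagonal[OF d] by auto
  define \<tau> :: complex where "\<tau> = of_real (t * d 1 (-1))"
  define line_poly where "line_poly =
    [:of_real (t * d 1 (-1) * (A - A^2 - t^2 * d (-1) 1 * d 1 (-1))),
      - of_real t * \<tau> * (of_real (d 0 1) * \<tau> + of_real (d 1 0) * of_real A),
      - of_real t * of_real (d 1 1) * \<tau>^2:]"
  have "t * d 1 (-1) * (A - A^2 - t^2 * d (-1) 1 * d 1 (-1)) \<noteq> 0"
    using t e generic by simp
  then have "coeff line_poly 0 \<noteq> 0"
    unfolding line_poly_def coeff_pCons_0 of_real_eq_0_iff .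
  then have line_poly: "line_poly \<noteq> 0"
    by auto
  have kernel_on_line: "of_real A^2 * kernel d t X (\<tau> * X / of_real A) = X^2 * poly line_poly X"
    if "A \<noteq> 0" for X
    using that unfolding kernel_genus_zero[OF d] line_poly_def \<tau>_def
    by (simp add: field_simps power2_eq_square)
  have "(X, Y) \<in> insert (0, 0) ((\<lambda>X. (X, \<tau> * X / of_real A)) ` {X. poly line_poly X = 0})"
    if K: "kernel d t X Y = 0" and bad: "X = 0 \<or> Y = 0 \<or> of_real A * Y = \<tau> * X" for X Y
  proof (cases "X = 0 \<or> Y = 0")
    case True
    then show ?thesis
      using K t \<alpha> e by (auto simp: kernel_genus_zero[OF d])
  next
    case False
    then have line: "of_real A * Y = \<tau> * X"
      using bad by blast
    with False t e have A: "A \<noteq> 0"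
      by (auto simp: \<tau>_def)
    with line have Y: "Y = \<tau> * X / of_real A"
      by (simp add: field_simps)
    with kernel_on_line[OF A, of X] K False have "poly line_poly X = 0"
      by simp
    with Y show ?thesis
      by blast
  qed
  then have "{(X, Y). kernel d t X Y = 0 \<and> (X = 0 \<or> Y = 0 \<or> of_real A * Y = \<tau> * X)}
      \<subseteq> insert (0, 0) ((\<lambda>X. (X, \<tau> * X / of_real A)) ` {X. poly line_poly X = 0})"
    by blast
  then show ?thesis
    unfolding \<tau>_def using poly_roots_finite[OF line_poly] finite_subset by blast
qed

lemma kernel_param_gamma1_eventually_nonzero:
  fixes A t :: real
  assumes "kernel_param d t x y" "genus_zero_weights d" "t \<noteq> 0"
    and "t^2 * d (-1) 1 * d 1 (-1) \<noteq> A - A^2"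
  shows "\<forall>\<^sub>F s in cofinite. of_real A / x s - of_real (t * d 1 (-1)) / y s \<noteq> 0"
proof -
  have "\<forall>\<^sub>F s in cofinite.
      \<not> (x s = 0 \<or> y s = 0 \<or> of_real A * y s = of_real (t * d 1 (-1)) * x s)"
    using kernel_curve_axes_line_finite[OF assms(2-4)]
    by (rule kernel_param_eventually_avoids[OF assms(1)])
  then show ?thesis
    by eventually_elim (auto simp: field_simps)
qed

lemma relation_eventually_nonzero:
  assumes "rat_fun h2"
    and rel: "\<forall>\<^sub>F s in cofinite. g1 s * h1 s + g2 s * h2 s = 0"
    and g1: "\<forall>\<^sub>F s in cofinite. g1 s \<noteq> (0::complex)"
    and nonzero: "\<not> ((\<forall>\<^sub>F s in cofinite. h1 s = 0) \<and> (\<forall>\<^sub>F s in cofinite. h2 s = 0))"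
  shows "\<forall>\<^sub>F s in cofinite. h2 s \<noteq> 0"
proof (rule ccontr)
  assume "\<not> (\<forall>\<^sub>F s in cofinite. h2 s \<noteq> 0)"
  then have h2: "\<forall>\<^sub>F s in cofinite. h2 s = 0"
    using rat_fun_eventually_zero_or_nonzero[OF assms(1)] by blast
  have "\<forall>\<^sub>F s in cofinite. h1 s = 0"
    using rel g1 h2 by eventually_elim simp
  with h2 nonzero show False
    by blast
qed

lemma shift_quotient_from_relation:
  fixes g1 g2 h1 h2 :: "complex \<Rightarrow> complex" and q \<epsilon> :: complex
  assumes rel: "\<forall>\<^sub>F s in cofinite. g1 s * h1 s + g2 s * h2 s = 0"
    and h1_inv: "\<forall>\<^sub>F s in cofinite. h1 (1 / s) = \<epsilon> * h1 s"
    and h2_inv: "\<forall>\<^sub>F s in cofinite. h2 (q / s) = \<epsilon> * h2 s"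
    and \<epsilon>: "\<epsilon> * \<epsilon> = 1"
    and g1: "\<forall>\<^sub>F s in cofinite. g1 s \<noteq> 0" and g2: "\<forall>\<^sub>F s in cofinite. g2 s \<noteq> 0"
    and h2: "\<forall>\<^sub>F s in cofinite. h2 s \<noteq> 0"
  shows "\<forall>\<^sub>F s in cofinite. h2 (q * s) / h2 s = (g1 (1 / s) / g2 (1 / s)) / (g1 s / g2 s)"
  using rel eventually_cofinite_inverse[OF rel] h1_inv eventually_cofinite_inverse[OF h2_inv]
    g1 eventually_cofinite_inverse[OF g2] h2
proof eventually_elim
  case (elim s)
  have "h1 s = - g2 s * h2 s / g1 s"
    using elim(1,5) by (simp add: field_simps add_eq_0_iff)
  moreover have "h2 (1 / s) = - g1 (1 / s) * h1 (1 / s) / g2 (1 / s)"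
    using elim(2,6) by (simp add: field_simps add_eq_0_iff)
  ultimately have "h2 (q * s) = (\<epsilon> * \<epsilon>) * g1 (1 / s) * g2 s * h2 s / (g2 (1 / s) * g1 s)"
    using elim(3,4) by (simp add: field_simps)
  then show ?case
    using \<epsilon> elim(5-7) by (simp add: field_simps)
qed

theorem lemma2p6:
  fixes d :: "int \<Rightarrow> int \<Rightarrow> real"
    and a b t q :: real
    and x y h1 h2 :: "complex \<Rightarrow> complex"
  assumes weights: "genus_zero_weights d"
    and ab: "a > 0" "b > 0"
    and t_transc: "transcendental_over (gen_field ({d i j | i j. True} \<union> {a, b})) t"
    and q_not_root_of_unity: "\<forall>n::nat. n > 0 \<longrightarrow> q ^ n \<noteq> 1"
    and param: "kernel_param d t x y"
    and x_inv: "\<forall>\<^sub>F s in cofinite. x (1 / s) = x s"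
    and y_inv: "\<forall>\<^sub>F s in cofinite. y (of_real q / s) = y s"
    and omega0: "1 - (1 - 1 / a) - (1 - 1 / b) = 0"
    and h_rat: "rat_fun h1" "rat_fun h2"
    and h_nonzero: "\<not> ((\<forall>\<^sub>F s in cofinite. h1 s = 0) \<and> (\<forall>\<^sub>F s in cofinite. h2 s = 0))"
    and h_eq:
      "(let A = 1 - 1 / a; B = 1 - 1 / b; \<omega> = 1 - A - B;
            g1 = (\<lambda>s. of_real A / x s - of_real (t * d 1 (-1)) / y s);
            g2 = (\<lambda>s. of_real B / y s - of_real (t * d (-1) 1) / x s)
        in ((\<forall>\<^sub>F s in cofinite. g1 s * h1 s + g2 s * h2 s + of_real \<omega> = 0) \<and>
            (\<forall>\<^sub>F s in cofinite. h1 (1 / s) = h1 s) \<and>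
            (\<forall>\<^sub>F s in cofinite. h2 (of_real q / s) = h2 s))
         \<or> ((\<forall>\<^sub>F s in cofinite. g1 s * h1 s + g2 s * h2 s = 0) \<and>
            (\<forall>\<^sub>F s in cofinite. h1 (1 / s) = - h1 s) \<and>
            (\<forall>\<^sub>F s in cofinite. h2 (of_real q / s) = - h2 s)))"
  shows "let A = 1 - 1 / a; B = 1 - 1 / b;
             g1 = (\<lambda>s. of_real A / x s - of_real (t * d 1 (-1)) / y s);
             g2 = (\<lambda>s. of_real B / y s - of_real (t * d (-1) 1) / x s);
             g = (\<lambda>s. g1 s / g2 s)
         in \<forall>\<^sub>F s in cofinite. h2 (of_real q * s) / h2 s = g (1 / s) / g s"
proof -
  define A where "A = 1 - 1 / a"
  define g1 where "g1 s = of_real A / x s - of_real (t * d 1 (-1)) / y s" for s :: complex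
  define g2 where "g2 s = of_real (1 - A) / y s - of_real (t * d (-1) 1) / x s" for s :: complex
  have B: "1 - 1 / b = 1 - A"
    using omega0 unfolding A_def by simp
  note t0 = transcendental_kernel_conditions(1)[OF weights t_transc]
  have generic: "t^2 * d (-1) 1 * d 1 (-1) \<noteq> A - A^2"
    using transcendental_kernel_conditions(2)[OF weights t_transc] unfolding A_def .
  have g1: "\<forall>\<^sub>F s in cofinite. g1 s \<noteq> 0"
    unfolding g1_def by (rule kernel_param_gamma1_eventually_nonzero[OF param weights t0 generic])
  have "t^2 * d 1 (-1) * d (-1) 1 \<noteq> (1 - A) - (1 - A)^2"
    using generic by (simp add: algebra_simps power2_eq_square)
  from kernel_param_gamma1_eventually_nonzero[OF kernel_param_transpose[OF param]
      genus_zero_weights_transpose[OF weights] t0 this]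
  have g2: "\<forall>\<^sub>F s in cofinite. g2 s \<noteq> 0"
    unfolding g2_def .
  obtain \<epsilon> :: complex where \<epsilon>: "\<epsilon> * \<epsilon> = 1"
    and rel: "\<forall>\<^sub>F s in cofinite. g1 s * h1 s + g2 s * h2 s = 0"
    and h1_inv: "\<forall>\<^sub>F s in cofinite. h1 (1 / s) = \<epsilon> * h1 s"
    and h2_inv: "\<forall>\<^sub>F s in cofinite. h2 (of_real q / s) = \<epsilon> * h2 s"
    using h_eq[unfolded Let_def B, folded A_def, folded g1_def g2_def]
    by (auto intro: that[of 1, simplified] that[of "-1", simplified])
  have h2: "\<forall>\<^sub>F s in cofinite. h2 s \<noteq> 0"
    by (rule relation_eventually_nonzero[OF h_rat(2) rel g1 h_nonzero])
  show ?thesis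
    using shift_quotient_from_relation[OF rel h1_inv h2_inv \<epsilon> g1 g2 h2]
    unfolding Let_def B by (fold A_def, fold g1_def g2_def)
qed

end
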